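(* A finite skew brace $A$ has $\Lambda(A)$ with exactly one vertex if and only if $A$ is isomorphic to a skew brace on a set $F\times\mathbb{Z}/2\mathbb{Z}$ with operations \[(f_1,k_1)+(f_2,k_2)=\big(f_1+(-1)^{k_1}f_2+k_1k_2y,\,k_1+k_2\big),\] \[(f_1,k_1)\circ(f_2,k_2)=\big(f_1+(-1)^{k_1}f_2+\psi(f_1,k_1,k_2)+k_1k_2y,\,k_1+k_2\big),\] where $F\neq\{0\}$ is a finite abelian group, $y\in F$ satisfies $2y=0$, and $\psi\colon F\times\mathbb{Z}/2\mathbb{Z}\times\mathbb{Z}/2\mathbb{Z}\to F$ is a surjective map of the form \[\psi(f,k_1,k_2)=[k_2]\big(\phi(f)-[k_1]z\big),\] with $\phi\in\operatorname{End}(F)$ and $z\in F$ satisfying $\phi(z)=\phi(y)-2z$ and $\phi(\phi(f))=-2\phi(f)$ for all $f\in F$.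
   Context: A skew brace is a triple $(A,+,\circ)$ where $(A,+)$ and $(A,\circ)$ are groups with $a\circ(b+c)=a\circ b-a+a\circ c$. $\lambda_a(b)=-a+a\circ b$ defines an action of $(A,\circ)$ on $(A,+)$ by automorphisms. $\Lambda(A)$ is the graph whose vertices are the $\lambda$-orbits of size $>1$, two distinct vertices $L_1,L_2$ adjacent iff $\gcd(|L_1|,|L_2|)\ne1$. For $k\in\mathbb{Z}/2\mathbb{Z}$, $[k]\in\{0,1\}$ denotes its representative (equivalently $[k]=\frac{1-(-1)^k}{2}$); products such as $k_1k_2y$ mean $[k_1][k_2]y$ and $(-1)^k$ is computed with any representative. *)

theory Defs
  imports "HOL-Algebra.Algebra"
begin

text \<open>A skew brace is given by a carrier set A and two binary operations
  pl (written +) and ci (written \<circ>).\<close>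

definition op_grp :: "'a set \<Rightarrow> ('a \<Rightarrow> 'a \<Rightarrow> 'a) \<Rightarrow> 'a monoid" where
  "op_grp A opr = \<lparr>carrier = A, monoid.mult = opr,
     one = (THE e. e \<in> A \<and> (\<forall>x\<in>A. opr e x = x \<and> opr x e = x))\<rparr>"

definition add_neg :: "'a set \<Rightarrow> ('a \<Rightarrow> 'a \<Rightarrow> 'a) \<Rightarrow> 'a \<Rightarrow> 'a" where
  "add_neg A pl a = inv\<^bsub>op_grp A pl\<^esub> a"

definition skew_brace :: "'a set \<Rightarrow> ('a \<Rightarrow> 'a \<Rightarrow> 'a) \<Rightarrow> ('a \<Rightarrow> 'a \<Rightarrow> 'a) \<Rightarrow> bool" where
  "skew_brace A pl ci \<longleftrightarrow>
     group (op_grp A pl) \<and> group (op_grp A ci) \<and>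
     (\<forall>a\<in>A. \<forall>b\<in>A. \<forall>c\<in>A.
        ci a (pl b c) = pl (ci a b) (pl (add_neg A pl a) (ci a c)))"

definition lam :: "'a set \<Rightarrow> ('a \<Rightarrow> 'a \<Rightarrow> 'a) \<Rightarrow> ('a \<Rightarrow> 'a \<Rightarrow> 'a) \<Rightarrow> 'a \<Rightarrow> 'a \<Rightarrow> 'a" where
  "lam A pl ci a b = pl (add_neg A pl a) (ci a b)"

definition lam_orbit :: "'a set \<Rightarrow> ('a \<Rightarrow> 'a \<Rightarrow> 'a) \<Rightarrow> ('a \<Rightarrow> 'a \<Rightarrow> 'a) \<Rightarrow> 'a \<Rightarrow> 'a set" where
  "lam_orbit A pl ci b = (\<lambda>a. lam A pl ci a b) ` A"

definition Lambda_vertices :: "'a set \<Rightarrow> ('a \<Rightarrow> 'a \<Rightarrow> 'a) \<Rightarrow> ('a \<Rightarrow> 'a \<Rightarrow> 'a) \<Rightarrow> 'a set set" where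
  "Lambda_vertices A pl ci =
     {L. \<exists>b\<in>A. L = lam_orbit A pl ci b \<and> card L > 1}"

text \<open>Edges of \<Lambda>(A) (not needed for counting vertices, included for completeness).\<close>
definition Lambda_edge :: "'a set \<Rightarrow> ('a \<Rightarrow> 'a \<Rightarrow> 'a) \<Rightarrow> ('a \<Rightarrow> 'a \<Rightarrow> 'a) \<Rightarrow> 'a set \<Rightarrow> 'a set \<Rightarrow> bool" where
  "Lambda_edge A pl ci L1 L2 \<longleftrightarrow>
     L1 \<in> Lambda_vertices A pl ci \<and> L2 \<in> Lambda_vertices A pl ci \<and> L1 \<noteq> L2 \<and>
     gcd (card L1) (card L2) \<noteq> 1"

definition brace_iso :: "'a set \<Rightarrow> ('a \<Rightarrow> 'a \<Rightarrow> 'a) \<Rightarrow> ('a \<Rightarrow> 'a \<Rightarrow> 'a) \<Rightarrow>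
    'b set \<Rightarrow> ('b \<Rightarrow> 'b \<Rightarrow> 'b) \<Rightarrow> ('b \<Rightarrow> 'b \<Rightarrow> 'b) \<Rightarrow> ('a \<Rightarrow> 'b) \<Rightarrow> bool" where
  "brace_iso A pl ci B pl' ci' h \<longleftrightarrow>
     bij_betw h A B \<and>
     (\<forall>a\<in>A. \<forall>b\<in>A. h (pl a b) = pl' (h a) (h b) \<and> h (ci a b) = ci' (h a) (h b))"

text \<open>Z/2Z is represented by {0,1} :: nat set, with addition (k1+k2) mod 2;
  [k] is k itself and (-1)^k f is f or -f according to the parity of k.
  The abelian group F is a HOL-Algebra structure written multiplicatively
  (\<otimes> is +, \<one> is 0, inv is negation).\<close>

definition Z2 :: "nat set" where "Z2 = {0, 1}"

definition sgn_act :: "('b, 'm) monoid_scheme \<Rightarrow> nat \<Rightarrow> 'b \<Rightarrow> 'b" where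
  "sgn_act F k f = (if odd k then inv\<^bsub>F\<^esub> f else f)"

definition kk_y :: "('b, 'm) monoid_scheme \<Rightarrow> 'b \<Rightarrow> nat \<Rightarrow> nat \<Rightarrow> 'b" where
  "kk_y F y k1 k2 = (if odd k1 \<and> odd k2 then y else \<one>\<^bsub>F\<^esub>)"

definition psi_map :: "('b, 'm) monoid_scheme \<Rightarrow> ('b \<Rightarrow> 'b) \<Rightarrow> 'b \<Rightarrow> 'b \<Rightarrow> nat \<Rightarrow> nat \<Rightarrow> 'b" where
  "psi_map F phi z f k1 k2 =
     (if odd k2 then phi f \<otimes>\<^bsub>F\<^esub> inv\<^bsub>F\<^esub> (if odd k1 then z else \<one>\<^bsub>F\<^esub>) else \<one>\<^bsub>F\<^esub>)"

definition std_carrier :: "('b, 'm) monoid_scheme \<Rightarrow> ('b \<times> nat) set" where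
  "std_carrier F = carrier F \<times> Z2"

definition std_add :: "('b, 'm) monoid_scheme \<Rightarrow> 'b \<Rightarrow> 'b \<times> nat \<Rightarrow> 'b \<times> nat \<Rightarrow> 'b \<times> nat" where
  "std_add F y p q = (case p of (f1, k1) \<Rightarrow> case q of (f2, k2) \<Rightarrow>
     (f1 \<otimes>\<^bsub>F\<^esub> sgn_act F k1 f2 \<otimes>\<^bsub>F\<^esub> kk_y F y k1 k2, (k1 + k2) mod 2))"

definition std_circ :: "('b, 'm) monoid_scheme \<Rightarrow> 'b \<Rightarrow> ('b \<Rightarrow> nat \<Rightarrow> nat \<Rightarrow> 'b) \<Rightarrow>
    'b \<times> nat \<Rightarrow> 'b \<times> nat \<Rightarrow> 'b \<times> nat" where
  "std_circ F y psi p q = (case p of (f1, k1) \<Rightarrow> case q of (f2, k2) \<Rightarrow>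
     (f1 \<otimes>\<^bsub>F\<^esub> sgn_act F k1 f2 \<otimes>\<^bsub>F\<^esub> psi f1 k1 k2 \<otimes>\<^bsub>F\<^esub> kk_y F y k1 k2,
      (k1 + k2) mod 2))"

definition admissible_params :: "('b, 'm) monoid_scheme \<Rightarrow> 'b \<Rightarrow> ('b \<Rightarrow> 'b) \<Rightarrow> 'b \<Rightarrow> bool" where
  "admissible_params F y phi z \<longleftrightarrow>
     comm_group F \<and> finite (carrier F) \<and> carrier F \<noteq> {\<one>\<^bsub>F\<^esub>} \<and>
     y \<in> carrier F \<and> y \<otimes>\<^bsub>F\<^esub> y = \<one>\<^bsub>F\<^esub> \<and>
     phi \<in> hom F F \<and> z \<in> carrier F \<and>
     phi z = phi y \<otimes>\<^bsub>F\<^esub> inv\<^bsub>F\<^esub> (z \<otimes>\<^bsub>F\<^esub> z) \<and>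
     (\<forall>f\<in>carrier F. phi (phi f) = inv\<^bsub>F\<^esub> (phi f \<otimes>\<^bsub>F\<^esub> phi f)) \<and>
     (\<lambda>(f, k1, k2). psi_map F phi z f k1 k2) ` (carrier F \<times> Z2 \<times> Z2) = carrier F"

end

theory Submission
  imports Defs "HOL-Algebra.Group_Action"
begin

text \<open>The \<open>\<lambda>\<close>-orbits of size one are exactly the points of the subgroup \<open>Fix\<close> of
  \<open>\<lambda>\<close>-fixed elements. If \<open>\<Lambda>(A)\<close> has a single vertex, \<open>A - Fix\<close> is one orbit; its size
  \<open>|Fix| (m - 1)\<close>, with \<open>m\<close> the index of \<open>Fix\<close>, divides \<open>|A| = |Fix| m\<close>, so \<open>m = 2\<close> and
  \<open>A = Fix \<union> (Fix + t)\<close>. Writing \<open>\<lambda>\<^sub>a(t) = \<delta>(a) + t\<close>, \<open>\<delta>\<close> is a homomorphism from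
  \<open>(A, \<circ>)\<close> onto \<open>Fix\<close>; applying \<open>\<lambda>\<close> to the fixed point \<open>t + t\<close> shows that conjugation by
  \<open>t\<close> inverts \<open>Fix\<close>, so \<open>Fix\<close> is abelian, and in the coordinates \<open>f + k t\<close> both operations
  take the stated form with \<open>F = Fix\<close>, \<open>y = t + t\<close>, \<open>\<phi> = \<delta>\<close> on \<open>Fix\<close> and \<open>z = \<delta>(t)\<close>.
  Conversely, in the model \<open>\<lambda>\<close> fixes every \<open>(f, 0)\<close> and, \<open>\<psi>\<close> being onto, moves \<open>(f, 1)\<close>
  through all of \<open>F \<times> {1}\<close>; as \<open>\<Lambda>\<close> is an isomorphism invariant, \<open>\<Lambda>(A)\<close> has one vertex.\<close>

section \<open>Isomorphism invariance of \<open>\<Lambda>\<close>\<close>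

lemma op_grp_carrier [simp]: "carrier (op_grp A opr) = A"
  and op_grp_mult [simp]: "monoid.mult (op_grp A opr) = opr"
  by (simp_all add: op_grp_def)

lemma op_grp_one_eqI:
  assumes "e \<in> A" and "\<And>x. x \<in> A \<Longrightarrow> opr e x = x \<and> opr x e = x"
  shows "\<one>\<^bsub>op_grp A opr\<^esub> = e"
  unfolding op_grp_def
proof (simp, rule the_equality)
  fix e' assume "e' \<in> A \<and> (\<forall>x\<in>A. opr e' x = x \<and> opr x e' = x)"
  then show "e' = e" using assms by metis
qed (use assms in blast)

lemma brace_iso_hom:
  assumes "brace_iso A pl ci B pl' ci' h"
  shows "h \<in> hom (op_grp A pl) (op_grp B pl')"
  using assms by (auto simp: brace_iso_def hom_def bij_betw_def)

lemma brace_iso_lam: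
  assumes A: "skew_brace A pl ci" and B: "group (op_grp B pl')"
    and iso: "brace_iso A pl ci B pl' ci' h" and a: "a \<in> A" and b: "b \<in> A"
  shows "h (lam A pl ci a b) = lam B pl' ci' (h a) (h b)"
proof -
  interpret GA: group "op_grp A pl" using A by (simp add: skew_brace_def)
  interpret CA: group "op_grp A ci" using A by (simp add: skew_brace_def)
  interpret group_hom "op_grp A pl" "op_grp B pl'" h
    using B brace_iso_hom[OF iso] by (simp add: group_hom_def group_hom_axioms_def GA.is_group)
  have "h (add_neg A pl a) = add_neg B pl' (h a)"
    using hom_inv[of a] a by (simp add: add_neg_def)
  moreover have "add_neg A pl a \<in> A" "ci a b \<in> A"
    using GA.inv_closed CA.m_closed a b by (simp_all add: add_neg_def)
  ultimately show ?thesis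
    using iso a b by (simp add: lam_def brace_iso_def)
qed

lemma lam_orbit_subset:
  assumes "skew_brace A pl ci" and "b \<in> A"
  shows "lam_orbit A pl ci b \<subseteq> A"
proof -
  interpret GA: group "op_grp A pl" using assms by (simp add: skew_brace_def)
  interpret CA: group "op_grp A ci" using assms by (simp add: skew_brace_def)
  show ?thesis
    using assms GA.inv_closed GA.m_closed CA.m_closed
    by (auto simp: lam_orbit_def lam_def add_neg_def)
qed

lemma brace_iso_lam_orbit:
  assumes A: "skew_brace A pl ci" and B: "group (op_grp B pl')"
    and iso: "brace_iso A pl ci B pl' ci' h" and b: "b \<in> A"
  shows "h ` lam_orbit A pl ci b = lam_orbit B pl' ci' (h b)"
proof -
  have "h ` A = B" using iso by (simp add: brace_iso_def bij_betw_def)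
  then show ?thesis
    unfolding lam_orbit_def image_image using brace_iso_lam[OF A B iso _ b] by auto
qed

lemma card_Lambda_vertices_brace_iso:
  assumes A: "skew_brace A pl ci" and B: "group (op_grp B pl')"
    and iso: "brace_iso A pl ci B pl' ci' h"
  shows "card (Lambda_vertices B pl' ci') = card (Lambda_vertices A pl ci)"
proof -
  have bij: "bij_betw h A B" using iso by (simp add: brace_iso_def)
  then have card_orbit: "card (lam_orbit B pl' ci' (h b)) = card (lam_orbit A pl ci b)" if "b \<in> A" for b
    using brace_iso_lam_orbit[OF A B iso that] lam_orbit_subset[OF A that]
    by (metis bij_betw_def card_image inj_on_subset)
  have "Lambda_vertices B pl' ci' = (`) h ` Lambda_vertices A pl ci"
  proof -
    have "Lambda_vertices B pl' ci' = {L. \<exists>b\<in>A. L = lam_orbit B pl' ci' (h b) \<and> 1 < card L}"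
      using bij unfolding Lambda_vertices_def bij_betw_def by blast
    also have "\<dots> = (`) h ` Lambda_vertices A pl ci"
    proof (intro equalityI subsetI)
      fix L assume "L \<in> {L. \<exists>b\<in>A. L = lam_orbit B pl' ci' (h b) \<and> 1 < card L}"
      then obtain b where "b \<in> A" "L = h ` lam_orbit A pl ci b" "1 < card (lam_orbit A pl ci b)"
        using brace_iso_lam_orbit[OF A B iso] card_orbit by auto
      then show "L \<in> (`) h ` Lambda_vertices A pl ci"
        unfolding Lambda_vertices_def by blast
    next
      fix L assume "L \<in> (`) h ` Lambda_vertices A pl ci"
      then obtain b where "b \<in> A" "L = h ` lam_orbit A pl ci b" "1 < card (lam_orbit A pl ci b)"
        unfolding Lambda_vertices_def by blast
      then show "L \<in> {L. \<exists>b\<in>A. L = lam_orbit B pl' ci' (h b) \<and> 1 < card L}"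
        using brace_iso_lam_orbit[OF A B iso] card_orbit by auto
    qed
    finally show ?thesis .
  qed
  moreover have "inj_on ((`) h) (Lambda_vertices A pl ci)"
    using inj_on_image_Pow[of h A] bij lam_orbit_subset[OF A]
    by (rule_tac inj_on_subset) (auto simp: Lambda_vertices_def bij_betw_def)
  ultimately show ?thesis by (simp add: card_image)
qed

lemma brace_iso_trans:
  assumes "brace_iso A pl ci B pl' ci' h" and "brace_iso B pl' ci' C pl'' ci'' g"
  shows "brace_iso A pl ci C pl'' ci'' (g \<circ> h)"
  using assms by (auto simp: brace_iso_def bij_betw_trans bij_betw_apply)

context comm_group
begin

text \<open>Cancellation of \<open>x\<close> against \<open>inv x\<close> across other factors, in the right-nested form
  to which \<open>m_ac\<close> normalises products.\<close>

lemma inv_cancel_AC1: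
  "\<lbrakk>x \<in> carrier G; a \<in> carrier G\<rbrakk> \<Longrightarrow> x \<otimes> (inv x \<otimes> a) = a"
  "\<lbrakk>x \<in> carrier G; a \<in> carrier G\<rbrakk> \<Longrightarrow> inv x \<otimes> (x \<otimes> a) = a"
  "\<lbrakk>x \<in> carrier G; a \<in> carrier G\<rbrakk> \<Longrightarrow> x \<otimes> (a \<otimes> inv x) = a"
  "\<lbrakk>x \<in> carrier G; a \<in> carrier G\<rbrakk> \<Longrightarrow> inv x \<otimes> (a \<otimes> x) = a"
  by (simp_all add: m_comm[of a] flip: m_assoc)

lemma inv_cancel_AC2:
  "\<lbrakk>x \<in> carrier G; a \<in> carrier G; b \<in> carrier G\<rbrakk> \<Longrightarrow> x \<otimes> (a \<otimes> (inv x \<otimes> b)) = a \<otimes> b"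
  "\<lbrakk>x \<in> carrier G; a \<in> carrier G; b \<in> carrier G\<rbrakk> \<Longrightarrow> inv x \<otimes> (a \<otimes> (x \<otimes> b)) = a \<otimes> b"
  "\<lbrakk>x \<in> carrier G; a \<in> carrier G; b \<in> carrier G\<rbrakk> \<Longrightarrow> x \<otimes> (a \<otimes> (b \<otimes> inv x)) = a \<otimes> b"
  "\<lbrakk>x \<in> carrier G; a \<in> carrier G; b \<in> carrier G\<rbrakk> \<Longrightarrow> inv x \<otimes> (a \<otimes> (b \<otimes> x)) = a \<otimes> b"
  by (simp_all add: m_lcomm[of x a] m_lcomm[of "inv x" a] inv_cancel_AC1)

lemma inv_cancel_AC3:
  "\<lbrakk>x \<in> carrier G; a \<in> carrier G; b \<in> carrier G; c \<in> carrier G\<rbrakk> \<Longrightarrow> x \<otimes> (a \<otimes> (b \<otimes> (inv x \<otimes> c))) = a \<otimes> (b \<otimes> c)"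
  "\<lbrakk>x \<in> carrier G; a \<in> carrier G; b \<in> carrier G; c \<in> carrier G\<rbrakk> \<Longrightarrow> inv x \<otimes> (a \<otimes> (b \<otimes> (x \<otimes> c))) = a \<otimes> (b \<otimes> c)"
  "\<lbrakk>x \<in> carrier G; a \<in> carrier G; b \<in> carrier G; c \<in> carrier G\<rbrakk> \<Longrightarrow> x \<otimes> (a \<otimes> (b \<otimes> (c \<otimes> inv x))) = a \<otimes> (b \<otimes> c)"
  "\<lbrakk>x \<in> carrier G; a \<in> carrier G; b \<in> carrier G; c \<in> carrier G\<rbrakk> \<Longrightarrow> inv x \<otimes> (a \<otimes> (b \<otimes> (c \<otimes> x))) = a \<otimes> (b \<otimes> c)"
  by (simp_all add: m_lcomm[of x a] m_lcomm[of "inv x" a] inv_cancel_AC2)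

lemmas inv_cancel_AC = inv_cancel_AC1 inv_cancel_AC2 inv_cancel_AC3

end

lemma (in group) iso_copy_on_nat:
  assumes "finite (carrier G)"
  obtains G' :: "nat monoid" and g where "group G'" and "g \<in> iso G G'"
proof -
  obtain g :: "'a \<Rightarrow> nat" where inj: "inj_on g (carrier G)"
    using finite_imp_inj_to_nat_seg[OF assms] by blast
  define gi where "gi = inv_into (carrier G) g"
  define G' where "G' = \<lparr>carrier = g ` carrier G, monoid.mult = (\<lambda>m n. g (gi m \<otimes> gi n)), one = g \<one>\<rparr>"
  have gi: "gi (g x) = x" if "x \<in> carrier G" for x
    using inj that by (simp add: gi_def)
  have hom: "g \<in> hom G G'" by (rule homI) (auto simp: G'_def gi)
  have "group (G'\<lparr>carrier := g ` carrier G, one := g \<one>\<rparr>)"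
    by (rule hom_imp_img_group[OF hom])
  then have "group G'" by (simp add: G'_def)
  moreover have "g \<in> iso G G'"
    using hom inj by (simp add: iso_def bij_betw_def G'_def)
  ultimately show ?thesis using that by blast
qed

section \<open>The model on \<open>F \<times> \<int>/2\<int>\<close>\<close>

lemma mem_std_carrier [simp]: "(f, k) \<in> std_carrier F \<longleftrightarrow> f \<in> carrier F \<and> k \<in> Z2"
  by (simp add: std_carrier_def)

locale std_add_group = comm_group F for F :: "('b, 'm) monoid_scheme" (structure) +
  fixes y assumes y_closed [simp]: "y \<in> carrier F" and y_y [simp]: "y \<otimes>\<^bsub>F\<^esub> y = \<one>\<^bsub>F\<^esub>"
begin

lemma std_carrier_cases:
  assumes "p \<in> std_carrier F"
  obtains f where "f \<in> carrier F" "p = (f, 0)" | f where "f \<in> carrier F" "p = (f, 1)"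
  using assms by (auto simp: std_carrier_def Z2_def)

lemma y_y_cancel [simp]: "x \<in> carrier F \<Longrightarrow> y \<otimes> (y \<otimes> x) = x"
  by (simp flip: m_assoc)

lemma inv_y [simp]: "inv y = y"
  using inv_equality[OF y_y] by simp

lemmas std_simps = std_add_def sgn_act_def kk_y_def m_ac inv_mult inv_cancel_AC

lemma std_add_one: "\<one>\<^bsub>op_grp (std_carrier F) (std_add F y)\<^esub> = (\<one>, 0)"
  by (rule op_grp_one_eqI) (auto simp: std_carrier_def Z2_def std_simps elim!: std_carrier_cases)

lemma group_std_add: "group (op_grp (std_carrier F) (std_add F y))"
proof (rule groupI, unfold op_grp_carrier op_grp_mult std_add_one)
  fix p q r assume "p \<in> std_carrier F" "q \<in> std_carrier F" "r \<in> std_carrier F"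
  then show "std_add F y (std_add F y p q) r = std_add F y p (std_add F y q r)"
    by (elim std_carrier_cases) (simp_all add: std_simps)
qed (auto simp: std_carrier_def Z2_def std_simps elim!: std_carrier_cases)

text \<open>Stated for a general \<open>k \<in> Z2\<close>: the simplifier rewrites \<open>(f, 1)\<close> to \<open>(f, Suc 0)\<close>, so a
  rule with \<open>(f, 1)\<close> on its left-hand side would never fire.\<close>

lemma std_add_neg:
  assumes "f \<in> carrier F" and "k \<in> Z2"
  shows "add_neg (std_carrier F) (std_add F y) (f, k) = (if even k then (inv f, 0) else (f \<otimes> y, 1))"
proof (rule group.inv_equality[OF group_std_add, folded add_neg_def, simplified])
  show "std_add F y (if even k then (inv f, 0) else (f \<otimes> y, 1)) (f, k) = \<one>\<^bsub>op_grp (std_carrier F) (std_add F y)\<^esub>"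
    using assms by (auto simp: Z2_def std_add_one std_simps)
qed (use assms in \<open>auto simp: Z2_def\<close>)

end

locale std_model =
  fixes F :: "('b, 'm) monoid_scheme" (structure) and y phi z
  assumes admissible: "admissible_params F y phi z"
begin

sublocale std_add_group F y
  using admissible by (simp add: std_add_group_def std_add_group_axioms_def admissible_params_def)

sublocale phi: group_hom F F phi
  using admissible by (simp add: group_hom_def group_hom_axioms_def admissible_params_def is_group)

lemma z_closed [simp]: "z \<in> carrier F"
  and phi_z: "phi z = phi y \<otimes> inv (z \<otimes> z)"
  and psi_surj: "(\<lambda>(f, k1, k2). psi_map F phi z f k1 k2) ` (carrier F \<times> Z2 \<times> Z2) = carrier F"
  using admissible by (simp_all add: admissible_params_def)

abbreviation "B \<equiv> std_carrier F"
abbreviation "addB \<equiv> std_add F y"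
abbreviation "circB \<equiv> std_circ F y (psi_map F phi z)"
abbreviation "lamB \<equiv> lam B addB circB"

lemma lam_std:
  assumes "f1 \<in> carrier F" and "f2 \<in> carrier F" and "k1 \<in> Z2" and "k2 \<in> Z2"
  shows "lamB (f1, k1) (f2, k2) =
    (if even k2 then (f2, 0) else if even k1 then (f2 \<otimes> phi f1, 1) else (f2 \<otimes> inv (phi f1) \<otimes> z, 1))"
  using assms by (auto simp: Z2_def lam_def std_add_neg std_circ_def psi_map_def std_simps)

lemma lam_orbit_std_even:
  assumes "f \<in> carrier F"
  shows "lam_orbit B addB circB (f, 0) = {(f, 0)}"
proof -
  have "(\<lambda>a. lamB a (f, 0)) ` B = (\<lambda>a. (f, 0)) ` B"
    using assms by (intro image_cong) (auto simp: lam_std Z2_def elim!: std_carrier_cases)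
  also have "\<dots> = {(f, 0)}"
    using one_closed by (auto simp: std_carrier_def Z2_def)
  finally show ?thesis unfolding lam_orbit_def .
qed

text \<open>Surjectivity of \<open>\<psi>\<close> is exactly what makes every translate of \<open>(f, 1)\<close> a \<open>\<lambda>\<close>-image.\<close>

lemma lam_std_translate:
  assumes f: "f \<in> carrier F" and d: "d \<in> carrier F"
  shows "\<exists>a\<in>B. lamB a (f, 1) = (f \<otimes> d, 1)"
proof -
  obtain g k1 k2 where g: "g \<in> carrier F" and k: "k1 \<in> Z2" "k2 \<in> Z2"
    and d_psi: "d = psi_map F phi z g k1 k2"
  proof -
    have "d \<in> (\<lambda>(g, k1, k2). psi_map F phi z g k1 k2) ` (carrier F \<times> Z2 \<times> Z2)"
      using d psi_surj by simp
    then show ?thesis using that by auto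
  qed
  consider "k2 = 0" | "k2 = 1" "k1 = 0" | "k2 = 1" "k1 = 1" using k by (auto simp: Z2_def)
  then show ?thesis
  proof cases
    case 1
    then have "lamB (\<one>, 0) (f, 1) = (f \<otimes> d, 1)"
      using f d_psi by (simp add: lam_std psi_map_def Z2_def)
    then show ?thesis by (intro bexI[of _ "(\<one>, 0)"]) (auto simp: Z2_def)
  next
    case 2
    then have "lamB (g, 0) (f, 1) = (f \<otimes> d, 1)"
      using f g d_psi by (simp add: lam_std psi_map_def Z2_def)
    then show ?thesis using g by (intro bexI[of _ "(g, 0)"]) (auto simp: Z2_def)
  next
    case 3
    define g' where "g' = inv g \<otimes> y \<otimes> inv z"
    have g': "g' \<in> carrier F" using g by (simp add: g'_def)
    have "phi g' = inv (phi g) \<otimes> z \<otimes> z"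
      using g by (simp add: g'_def phi_z std_simps)
    then have "lamB (g', 1) (f, 1) = (f \<otimes> d, 1)"
      using 3 f g g' d_psi by (simp add: lam_std psi_map_def Z2_def std_simps)
    then show ?thesis using g' by (intro bexI[of _ "(g', 1)"]) (auto simp: Z2_def)
  qed
qed

lemma lam_orbit_std_odd:
  assumes "f \<in> carrier F"
  shows "lam_orbit B addB circB (f, 1) = carrier F \<times> {1}"
proof (intro equalityI subsetI)
  fix p assume "p \<in> lam_orbit B addB circB (f, 1)"
  then obtain g k where "g \<in> carrier F" "k \<in> Z2" "p = lamB (g, k) (f, 1)"
    unfolding lam_orbit_def by (auto simp: std_carrier_def)
  then show "p \<in> carrier F \<times> {1}"
    using assms by (simp add: lam_std Z2_def)
next
  fix p assume "p \<in> carrier F \<times> {1::nat}"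
  then obtain g where g: "g \<in> carrier F" "p = (f \<otimes> (inv f \<otimes> g), 1)"
    using assms by (auto simp: std_simps)
  moreover obtain a where "a \<in> B" "lamB a (f, 1) = (f \<otimes> (inv f \<otimes> g), 1)"
    using lam_std_translate[OF assms, of "inv f \<otimes> g"] g assms by auto
  ultimately show "p \<in> lam_orbit B addB circB (f, 1)"
    unfolding lam_orbit_def by (metis rev_image_eqI)
qed

lemma card_carrier_gt_1: "card (carrier F) > 1"
proof -
  obtain x where x: "x \<in> carrier F" "x \<noteq> \<one>"
    using admissible one_closed by (auto simp: admissible_params_def)
  have "card {x, \<one>} \<le> card (carrier F)"
    using x admissible by (intro card_mono) (auto simp: admissible_params_def)
  then show ?thesis using x by simp
qed

lemma Lambda_vertices_std:
  "Lambda_vertices B addB circB = {carrier F \<times> {1}}"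
proof (intro equalityI subsetI)
  fix L assume "L \<in> Lambda_vertices B addB circB"
  then obtain f k where "f \<in> carrier F" "k \<in> Z2" "card L > 1"
    "L = lam_orbit B addB circB (f, k)"
    unfolding Lambda_vertices_def std_carrier_def by blast
  then show "L \<in> {carrier F \<times> {1}}"
    using lam_orbit_std_even lam_orbit_std_odd by (auto simp: Z2_def)
next
  fix L assume "L \<in> {carrier F \<times> {1::nat}}"
  moreover have "card (carrier F \<times> {1::nat}) > 1"
    using card_carrier_gt_1 by (simp add: card_cartesian_product)
  ultimately show "L \<in> Lambda_vertices B addB circB"
    unfolding Lambda_vertices_def using lam_orbit_std_odd[OF one_closed]
    by (intro CollectI bexI[of _ "(\<one>, 1)"]) (auto simp: Z2_def)
qed

context
  fixes F' :: "('c, 'n) monoid_scheme" and g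
  assumes F': "group F'" and g: "g \<in> iso F F'"
begin

interpretation g: group_hom F F' g
  using F' g by (simp add: group_hom_def group_hom_axioms_def iso_def is_group)

definition phi' :: "'c \<Rightarrow> 'c" where
  "phi' m = g (phi (inv_into (carrier F) g m))"

lemma g_bij: "bij_betw g (carrier F) (carrier F')"
  using g by (simp add: iso_def)

lemma carrier_F': "carrier F' = g ` carrier F"
  using g_bij by (simp add: bij_betw_def)

lemma phi'_g [simp]: "x \<in> carrier F \<Longrightarrow> phi' (g x) = g (phi x)"
  using g_bij by (simp add: phi'_def bij_betw_def)

lemma sgn_act_g: "f \<in> carrier F \<Longrightarrow> sgn_act F' k (g f) = g (sgn_act F k f)"
  by (simp add: sgn_act_def)

lemma kk_y_g: "kk_y F' (g y) k1 k2 = g (kk_y F y k1 k2)"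
  by (simp add: kk_y_def)

lemma psi_map_g: "f \<in> carrier F \<Longrightarrow> psi_map F' phi' (g z) (g f) k1 k2 = g (psi_map F phi z f k1 k2)"
  by (simp add: psi_map_def)

lemma admissible_params_iso: "admissible_params F' (g y) phi' (g z)"
  unfolding admissible_params_def
proof (intro conjI)
  show "comm_group F'"
    using iso_imp_comm_group[of F'] g F' by (auto simp: is_iso_def group.is_monoid)
  show "finite (carrier F')"
    using admissible by (simp add: carrier_F' admissible_params_def)
  show "carrier F' \<noteq> {\<one>\<^bsub>F'\<^esub>}"
  proof
    assume "carrier F' = {\<one>\<^bsub>F'\<^esub>}"
    then have "card (carrier F) = 1"
      using bij_betw_same_card[OF g_bij] by simp
    then show False using card_carrier_gt_1 by simp
  qed
  show "phi' \<in> hom F' F'"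
    by (rule homI) (auto simp: carrier_F' simp flip: g.hom_mult)
  show "\<forall>m\<in>carrier F'. phi' (phi' m) = inv\<^bsub>F'\<^esub> (phi' m \<otimes>\<^bsub>F'\<^esub> phi' m)"
    using admissible by (auto simp: carrier_F' admissible_params_def simp flip: g.hom_mult g.hom_inv)
  show "(\<lambda>(f, k1, k2). psi_map F' phi' (g z) f k1 k2) ` (carrier F' \<times> Z2 \<times> Z2) = carrier F'"
  proof -
    have "(\<lambda>(f, k1, k2). psi_map F' phi' (g z) f k1 k2) ` (carrier F' \<times> Z2 \<times> Z2)
        = g ` (\<lambda>(f, k1, k2). psi_map F phi z f k1 k2) ` (carrier F \<times> Z2 \<times> Z2)"
      by (force simp: carrier_F' psi_map_g image_iff)
    then show ?thesis by (simp add: psi_surj carrier_F')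
  qed
  show "g y \<in> carrier F'" "g z \<in> carrier F'" by simp_all
  show "g y \<otimes>\<^bsub>F'\<^esub> g y = \<one>\<^bsub>F'\<^esub>"
    by (simp flip: g.hom_mult)
  show "phi' (g z) = phi' (g y) \<otimes>\<^bsub>F'\<^esub> inv\<^bsub>F'\<^esub> (g z \<otimes>\<^bsub>F'\<^esub> g z)"
    by (simp add: phi_z flip: g.hom_mult g.hom_inv)
qed

lemma brace_iso_std_model:
  "brace_iso B addB circB
     (std_carrier F') (std_add F' (g y)) (std_circ F' (g y) (psi_map F' phi' (g z))) (map_prod g id)"
  unfolding brace_iso_def
proof (intro conjI ballI)
  show "bij_betw (map_prod g id) B (std_carrier F')"
    unfolding std_carrier_def by (intro bij_betw_map_prod g_bij bij_betw_id)
next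
  fix p q assume "p \<in> B" "q \<in> B"
  then obtain f1 k1 f2 k2 where "p = (f1, k1)" "q = (f2, k2)" "f1 \<in> carrier F" "f2 \<in> carrier F"
    by (auto simp: std_carrier_def)
  moreover have "sgn_act F k1 f2 \<in> carrier F" "kk_y F y k1 k2 \<in> carrier F"
    "psi_map F phi z f1 k1 k2 \<in> carrier F"
    using \<open>f1 \<in> carrier F\<close> \<open>f2 \<in> carrier F\<close> by (simp_all add: sgn_act_def kk_y_def psi_map_def)
  ultimately show "map_prod g id (addB p q) = std_add F' (g y) (map_prod g id p) (map_prod g id q)"
    and "map_prod g id (circB p q)
      = std_circ F' (g y) (psi_map F' phi' (g z)) (map_prod g id p) (map_prod g id q)"
    by (simp_all add: std_add_def std_circ_def sgn_act_g kk_y_g psi_map_g)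
qed

end

end

lemma card_Lambda_vertices_std_model:
  assumes "skew_brace A pl ci" and "admissible_params F y phi z"
    and "brace_iso A pl ci (std_carrier F) (std_add F y) (std_circ F y (psi_map F phi z)) h"
  shows "card (Lambda_vertices A pl ci) = 1"
proof -
  interpret std_model F y phi z by (rule std_model.intro[OF assms(2)])
  show ?thesis
    using card_Lambda_vertices_brace_iso[OF assms(1) group_std_add assms(3)] Lambda_vertices_std
    by simp
qed

section \<open>The \<open>\<lambda>\<close>-action of a skew brace\<close>

locale brace =
  fixes A :: "'a set" and pl ci :: "'a \<Rightarrow> 'a \<Rightarrow> 'a"
  assumes skew_brace: "skew_brace A pl ci"
begin

sublocale add: group "op_grp A pl" using skew_brace by (simp add: skew_brace_def)
sublocale circ: group "op_grp A ci" using skew_brace by (simp add: skew_brace_def)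

abbreviation zero :: 'a where "zero \<equiv> \<one>\<^bsub>op_grp A pl\<^esub>"
abbreviation neg :: "'a \<Rightarrow> 'a" where "neg \<equiv> m_inv (op_grp A pl)"
abbreviation cinv :: "'a \<Rightarrow> 'a" where "cinv \<equiv> m_inv (op_grp A ci)"
abbreviation act :: "'a \<Rightarrow> 'a \<Rightarrow> 'a" where "act \<equiv> lam A pl ci"

lemma zero_closed [simp]: "zero \<in> A"
  and neg_closed [simp]: "a \<in> A \<Longrightarrow> neg a \<in> A"
  and cinv_closed [simp]: "a \<in> A \<Longrightarrow> cinv a \<in> A"
  and pl_closed [simp]: "a \<in> A \<Longrightarrow> b \<in> A \<Longrightarrow> pl a b \<in> A"
  and ci_closed [simp]: "a \<in> A \<Longrightarrow> b \<in> A \<Longrightarrow> ci a b \<in> A"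
  using add.one_closed add.inv_closed circ.inv_closed add.m_closed circ.m_closed by simp_all

lemma pl_assoc: "a \<in> A \<Longrightarrow> b \<in> A \<Longrightarrow> c \<in> A \<Longrightarrow> pl (pl a b) c = pl a (pl b c)"
  and ci_assoc: "a \<in> A \<Longrightarrow> b \<in> A \<Longrightarrow> c \<in> A \<Longrightarrow> ci (ci a b) c = ci a (ci b c)"
  using add.m_assoc circ.m_assoc by simp_all

lemma pl_zero [simp]: "a \<in> A \<Longrightarrow> pl a zero = a" "a \<in> A \<Longrightarrow> pl zero a = a"
  and pl_neg [simp]: "a \<in> A \<Longrightarrow> pl a (neg a) = zero" "a \<in> A \<Longrightarrow> pl (neg a) a = zero"
  and neg_neg [simp]: "a \<in> A \<Longrightarrow> neg (neg a) = a"
  using add.r_one add.l_one add.r_inv add.l_inv add.inv_inv by simp_all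

lemma pl_neg_cancel [simp]:
  "a \<in> A \<Longrightarrow> b \<in> A \<Longrightarrow> pl a (pl (neg a) b) = b"
  "a \<in> A \<Longrightarrow> b \<in> A \<Longrightarrow> pl (neg a) (pl a b) = b"
  by (simp_all flip: pl_assoc)

lemma neg_pl: "a \<in> A \<Longrightarrow> b \<in> A \<Longrightarrow> neg (pl a b) = pl (neg b) (neg a)"
  using add.inv_mult_group by simp

lemma pl_right_cancel [simp]: "x \<in> A \<Longrightarrow> a \<in> A \<Longrightarrow> b \<in> A \<Longrightarrow> pl a x = pl b x \<longleftrightarrow> a = b"
  using add.r_cancel[of a x b] by auto

lemma pl_left_cancel [simp]: "x \<in> A \<Longrightarrow> a \<in> A \<Longrightarrow> b \<in> A \<Longrightarrow> pl x a = pl x b \<longleftrightarrow> a = b"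
  using add.l_cancel[of x a b] by auto

lemma neg_unique: "a \<in> A \<Longrightarrow> b \<in> A \<Longrightarrow> pl a b = zero \<Longrightarrow> neg b = a"
  using add.inv_equality by simp

lemma brace_distrib: "a \<in> A \<Longrightarrow> b \<in> A \<Longrightarrow> c \<in> A \<Longrightarrow> ci a (pl b c) = pl (ci a b) (pl (neg a) (ci a c))"
  using skew_brace by (simp add: skew_brace_def add_neg_def)

lemma act_eq: "act a b = pl (neg a) (ci a b)"
  by (simp add: lam_def add_neg_def)

lemma act_closed [simp]: "a \<in> A \<Longrightarrow> b \<in> A \<Longrightarrow> act a b \<in> A"
  by (simp add: act_eq)

lemma ci_eq_pl_act: "a \<in> A \<Longrightarrow> b \<in> A \<Longrightarrow> ci a b = pl a (act a b)"
  by (simp add: act_eq)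

lemma act_pl: "a \<in> A \<Longrightarrow> b \<in> A \<Longrightarrow> c \<in> A \<Longrightarrow> act a (pl b c) = pl (act a b) (act a c)"
  by (simp add: act_eq brace_distrib pl_assoc)

lemma act_zero [simp]: "a \<in> A \<Longrightarrow> act a zero = zero"
  using act_pl[of a zero zero] add.l_cancel_one[of "act a zero" "act a zero"] by simp

lemma ci_zero [simp]: "a \<in> A \<Longrightarrow> ci a zero = a"
  by (simp add: ci_eq_pl_act)

lemma circ_one: "\<one>\<^bsub>op_grp A ci\<^esub> = zero"
  using ci_zero[of "\<one>\<^bsub>op_grp A ci\<^esub>"] circ.l_one[of zero] circ.one_closed by simp

lemma zero_ci [simp]: "a \<in> A \<Longrightarrow> ci zero a = a"
  and ci_cinv [simp]: "a \<in> A \<Longrightarrow> ci a (cinv a) = zero" "a \<in> A \<Longrightarrow> ci (cinv a) a = zero"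
  using circ.l_one circ.r_inv circ.l_inv by (simp_all add: circ_one)

lemma act_zero_left [simp]: "b \<in> A \<Longrightarrow> act zero b = b"
  by (simp add: act_eq)

lemma act_neg: "a \<in> A \<Longrightarrow> b \<in> A \<Longrightarrow> act a (neg b) = neg (act a b)"
  using act_pl[of a "neg b" b] by (intro neg_unique[symmetric]) simp_all

lemma act_ci: "a \<in> A \<Longrightarrow> b \<in> A \<Longrightarrow> c \<in> A \<Longrightarrow> act (ci a b) c = act a (act b c)"
proof -
  assume a: "a \<in> A" and b: "b \<in> A" and c: "c \<in> A"
  have "act a (act b c) = pl (act a (neg b)) (act a (ci b c))"
    using a b c by (simp add: act_eq[of b] act_pl)
  also have "\<dots> = pl (pl (neg (ci a b)) a) (pl (neg a) (ci a (ci b c)))"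
    using a b c by (simp add: act_neg) (simp add: act_eq neg_pl)
  also have "\<dots> = act (ci a b) c"
    using a b c by (simp add: act_eq pl_assoc ci_assoc)
  finally show ?thesis by simp
qed

lemma act_cinv [simp]: "a \<in> A \<Longrightarrow> b \<in> A \<Longrightarrow> act (cinv a) (act a b) = b"
  and act_cinv' [simp]: "a \<in> A \<Longrightarrow> b \<in> A \<Longrightarrow> act a (act (cinv a) b) = b"
  by (simp_all flip: act_ci)

lemma act_group_action: "group_action (op_grp A ci) A (\<lambda>a. restrict (act a) A)"
proof -
  have "restrict (act a) A \<in> Bij A" if "a \<in> A" for a
    using that by (auto simp: Bij_def intro!: bij_betw_byWitness[where f' = "act (cinv a)"])
  moreover have "restrict (act (ci a b)) A = compose A (restrict (act a) A) (restrict (act b) A)"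
    if "a \<in> A" "b \<in> A" for a b
    using that by (simp add: compose_def act_ci fun_eq_iff)
  ultimately have "(\<lambda>a. restrict (act a) A) \<in> hom (op_grp A ci) (BijGroup A)"
    by (auto intro!: homI simp: BijGroup_def)
  then show ?thesis
    unfolding group_action_def group_hom_def group_hom_axioms_def
    using group_BijGroup circ.is_group by blast
qed

lemma card_lam_orbit_dvd: "b \<in> A \<Longrightarrow> card (lam_orbit A pl ci b) dvd card A"
proof -
  assume b: "b \<in> A"
  have "orbit (op_grp A ci) (\<lambda>a. restrict (act a) A) b = lam_orbit A pl ci b"
    using b by (auto simp: orbit_def lam_orbit_def)
  then show ?thesis
    using group_action.orbit_stabilizer_theorem[OF act_group_action b]
    by (metis dvd_triv_left op_grp_carrier order_def)
qed

definition Fix :: "'a set" where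
  "Fix = {b \<in> A. \<forall>a\<in>A. act a b = b}"

lemma Fix_subgroup: "subgroup Fix (op_grp A pl)"
proof (rule add.subgroupI)
  show "Fix \<noteq> {}" unfolding Fix_def using zero_closed act_zero by blast
  fix a b assume "a \<in> Fix" "b \<in> Fix"
  then show "inv\<^bsub>op_grp A pl\<^esub> a \<in> Fix" "a \<otimes>\<^bsub>op_grp A pl\<^esub> b \<in> Fix"
    unfolding Fix_def by (auto simp: act_neg act_pl)
qed (auto simp: Fix_def)

lemma Fix_subset: "Fix \<subseteq> A"
  and Fix_closed [simp]: "b \<in> Fix \<Longrightarrow> b \<in> A"
  and act_Fix [simp]: "b \<in> Fix \<Longrightarrow> a \<in> A \<Longrightarrow> act a b = b"
  by (auto simp: Fix_def)

lemma zero_Fix [simp]: "zero \<in> Fix"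
  and pl_Fix [simp]: "a \<in> Fix \<Longrightarrow> b \<in> Fix \<Longrightarrow> pl a b \<in> Fix"
  and neg_Fix [simp]: "a \<in> Fix \<Longrightarrow> neg a \<in> Fix"
  using subgroup.one_closed[OF Fix_subgroup] subgroup.m_closed[OF Fix_subgroup]
    subgroup.m_inv_closed[OF Fix_subgroup] by simp_all

lemma lam_orbit_nonfixed_subset:
  assumes "b \<in> A" and "b \<notin> Fix"
  shows "lam_orbit A pl ci b \<subseteq> A - Fix"
proof
  fix c assume "c \<in> lam_orbit A pl ci b"
  then obtain a where a: "a \<in> A" "c = act a b" by (auto simp: lam_orbit_def)
  have "c \<notin> Fix"
  proof
    assume "c \<in> Fix"
    then have "act (cinv a) c = c" using a by simp
    then have "b = c" using a assms by simp
    then show False using \<open>c \<in> Fix\<close> assms by simp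
  qed
  then show "c \<in> A - Fix" using a assms by simp
qed

lemma mem_lam_orbit_self: "b \<in> A \<Longrightarrow> b \<in> lam_orbit A pl ci b"
  unfolding lam_orbit_def by (rule image_eqI[of _ _ zero]) auto

lemma card_lam_orbit_eq_1_iff:
  assumes b: "b \<in> A"
  shows "card (lam_orbit A pl ci b) = 1 \<longleftrightarrow> b \<in> Fix"
proof
  assume "card (lam_orbit A pl ci b) = 1"
  then have "lam_orbit A pl ci b = {b}"
    using mem_lam_orbit_self[OF b] by (metis card_1_singletonE singletonD)
  then show "b \<in> Fix" using b unfolding Fix_def lam_orbit_def by auto
next
  assume "b \<in> Fix"
  then have "lam_orbit A pl ci b = {b}"
    using mem_lam_orbit_self[OF b] by (auto simp: lam_orbit_def)
  then show "card (lam_orbit A pl ci b) = 1" by simp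
qed

end

section \<open>Skew braces whose graph \<open>\<Lambda>\<close> has one vertex\<close>

locale one_vertex_brace = brace +
  assumes finite: "finite A" and one_vertex: "card (Lambda_vertices A pl ci) = 1"
begin

lemma card_lam_orbit_gt_1: "b \<in> A \<Longrightarrow> b \<notin> Fix \<Longrightarrow> card (lam_orbit A pl ci b) > 1"
  using card_lam_orbit_eq_1_iff[of b] mem_lam_orbit_self[of b]
    finite_subset[OF lam_orbit_subset[OF skew_brace] finite]
  by (metis card_0_eq empty_iff less_one linorder_neqE_nat)

lemma Lambda_vertices_eq: "Lambda_vertices A pl ci = {A - Fix}"
proof -
  obtain L where L: "Lambda_vertices A pl ci = {L}"
    using one_vertex by (meson card_1_singletonE)
  have orbit_L: "lam_orbit A pl ci b = L" if "b \<in> A" "b \<notin> Fix" for b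
    using L that card_lam_orbit_gt_1 unfolding Lambda_vertices_def by blast
  obtain b0 where b0: "b0 \<in> A" "L = lam_orbit A pl ci b0" "card L > 1"
    using L unfolding Lambda_vertices_def by blast
  have "b0 \<notin> Fix" using b0 card_lam_orbit_eq_1_iff[of b0] by simp
  then have "L \<subseteq> A - Fix" using b0 lam_orbit_nonfixed_subset by simp
  moreover have "A - Fix \<subseteq> L" using orbit_L mem_lam_orbit_self by blast
  ultimately show ?thesis using L by blast
qed

lemma finite_Fix: "finite Fix"
  using finite_subset[OF Fix_subset finite] .

lemma lam_orbit_nonfixed: "b \<in> A \<Longrightarrow> b \<notin> Fix \<Longrightarrow> lam_orbit A pl ci b = A - Fix"
  using Lambda_vertices_eq card_lam_orbit_gt_1 unfolding Lambda_vertices_def by blast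

lemma card_nonfixed_gt_1: "card (A - Fix) > 1"
  using Lambda_vertices_eq unfolding Lambda_vertices_def by blast

text \<open>With \<open>m\<close> the index of \<open>Fix\<close> in \<open>(A, +)\<close>, the orbit \<open>A - Fix\<close> has \<open>|Fix| (m - 1)\<close>
  elements and divides \<open>|A| = |Fix| m\<close>, so \<open>m - 1\<close> divides \<open>1\<close>.\<close>

lemma card_nonfixed: "card (A - Fix) = card Fix"
proof -
  obtain b where b: "b \<in> A" "b \<notin> Fix"
    using card_nonfixed_gt_1 by (metis Diff_iff all_not_in_conv card.empty not_one_less_zero)
  have dvd: "card (A - Fix) dvd card A"
    using card_lam_orbit_dvd[OF b(1)] lam_orbit_nonfixed[OF b] by simp
  define m where "m = card (rcosets\<^bsub>op_grp A pl\<^esub> Fix)"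
  have index: "card A = card Fix * m"
    using add.lagrange[OF Fix_subgroup] by (simp add: m_def order_def mult.commute)
  have pos: "card Fix > 0" using finite_Fix zero_Fix card_gt_0_iff by blast
  have "card (A - Fix) = card A - card Fix"
    using card_Diff_subset[OF finite_Fix Fix_subset] .
  also have "\<dots> = card Fix * (m - 1)"
    by (simp add: index diff_mult_distrib2)
  finally have diff: "card (A - Fix) = card Fix * (m - 1)" .
  then have "m - 1 dvd m"
    using dvd pos by (simp add: index)
  moreover have "m - 1 > 0"
    using diff card_nonfixed_gt_1 by (metis gr0I mult_0_right not_one_less_zero)
  ultimately have "m - 1 dvd 1"
    using dvd_diff_nat[of "m - 1" m "m - 1"] by simp
  then have "m - 1 = 1"
    by simp
  then show ?thesis
    using diff by simp
qed

text \<open>\<open>t\<close> represents the coset \<open>A - Fix\<close>, and \<open>\<lambda>\<^sub>a(t) = \<delta>(a) + t\<close> (lemma \<open>act_t_eq\<close>).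
  The parameters of the model will be \<open>Fix\<close>, \<open>y0\<close>, \<open>\<delta>\<close> and \<open>z0\<close>.\<close>

definition t :: 'a where "t = (SOME x. x \<in> A - Fix)"
definition delta :: "'a \<Rightarrow> 'a" where "delta a = pl (act a t) (neg t)"
definition y0 :: 'a where "y0 = pl t t"
definition z0 :: 'a where "z0 = delta t"

lemma t_nonfixed: "t \<in> A" "t \<notin> Fix"
proof -
  have "A - Fix \<noteq> {}" using card_nonfixed_gt_1 by (metis card.empty not_one_less_zero)
  then have "t \<in> A - Fix" unfolding t_def by (meson ex_in_conv someI_ex)
  then show "t \<in> A" "t \<notin> Fix" by auto
qed

lemma t_closed [simp]: "t \<in> A" using t_nonfixed by simp

lemma pl_t_nonfixed: "f \<in> Fix \<Longrightarrow> pl f t \<notin> Fix"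
proof
  assume f: "f \<in> Fix" and "pl f t \<in> Fix"
  then have "t \<in> Fix" using pl_Fix[OF neg_Fix[OF f] \<open>pl f t \<in> Fix\<close>] f by simp
  then show False using t_nonfixed by simp
qed

lemma nonfixed_eq_coset: "A - Fix = (\<lambda>h. pl h t) ` Fix"
proof -
  have sub: "(\<lambda>h. pl h t) ` Fix \<subseteq> A - Fix" using pl_t_nonfixed by auto
  have inj: "inj_on (\<lambda>h. pl h t) Fix" by (rule inj_onI) simp
  have "card ((\<lambda>h. pl h t) ` Fix) = card (A - Fix)" using card_image[OF inj] card_nonfixed by simp
  then show ?thesis using card_subset_eq[OF _ sub] finite by auto
qed

lemma Fix_coset_cases:
  assumes "a \<in> A"
  obtains (fixed) "a \<in> Fix" | (coset) f where "f \<in> Fix" "a = pl f t"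
  using nonfixed_eq_coset assms by blast

lemma lam_orbit_t: "lam_orbit A pl ci t = A - Fix"
  using lam_orbit_nonfixed[OF t_nonfixed] by simp

lemma delta_Fix [simp]: "a \<in> A \<Longrightarrow> delta a \<in> Fix"
  and act_t_eq: "a \<in> A \<Longrightarrow> act a t = pl (delta a) t"
proof -
  assume a: "a \<in> A"
  have "act a t \<in> A - Fix" using lam_orbit_t a unfolding lam_orbit_def by blast
  then obtain f where f: "f \<in> Fix" "act a t = pl f t" using nonfixed_eq_coset by blast
  then have "delta a = f" unfolding delta_def using pl_assoc by simp
  then show "delta a \<in> Fix" "act a t = pl (delta a) t" using f by simp_all
qed

lemma delta_surj: "f \<in> Fix \<Longrightarrow> \<exists>a\<in>A. delta a = f"
proof -
  assume f: "f \<in> Fix"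
  have "pl f t \<in> lam_orbit A pl ci t" using lam_orbit_t pl_t_nonfixed[OF f] f by simp
  then obtain a where a: "a \<in> A" "pl f t = act a t" unfolding lam_orbit_def by blast
  then have "pl f t = pl (delta a) t" using act_t_eq by simp
  then have "delta a = f" using f a by simp
  then show ?thesis using a by blast
qed

lemma y0_Fix [simp]: "y0 \<in> Fix"
proof -
  have "y0 \<in> A" by (simp add: y0_def)
  then show ?thesis
  proof (cases rule: Fix_coset_cases)
    case (coset f)
    then have "t = f" by (simp add: y0_def)
    then show ?thesis using coset t_nonfixed by simp
  qed
qed

text \<open>Apply \<open>\<lambda>\<^sub>a\<close>, with \<open>\<delta>(a) = h\<close>, to the fixed point \<open>t + t\<close>.\<close>

lemma t_pl_Fix: "h \<in> Fix \<Longrightarrow> pl t h = pl (neg h) t"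
proof -
  assume h: "h \<in> Fix"
  obtain a where a: "a \<in> A" "delta a = h" using delta_surj[OF h] by blast
  have "act a (pl t t) = pl t t" using act_Fix[OF y0_Fix a(1)] unfolding y0_def .
  moreover have "act a (pl t t) = pl (pl h t) (pl h t)" using a by (simp add: act_pl act_t_eq)
  ultimately have "pl (pl (pl h t) h) t = pl t t" using h by (simp add: pl_assoc)
  then have "pl (pl h t) h = t" using h by simp
  then have "pl h (pl t h) = t" using h by (simp add: pl_assoc)
  then have "pl (neg h) (pl h (pl t h)) = pl (neg h) t" by simp
  then show ?thesis using h by simp
qed

lemma Fix_comm: "g \<in> Fix \<Longrightarrow> h \<in> Fix \<Longrightarrow> pl g h = pl h g"
proof -
  have "pl h (neg g) = pl (neg g) h" if g: "g \<in> Fix" and h: "h \<in> Fix" for g h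
  proof -
    obtain a where a: "a \<in> A" "delta a = h" using delta_surj[OF h] by blast
    have "pl h (pl (neg g) t) = pl (pl h t) g" using g h by (simp add: pl_assoc t_pl_Fix)
    also have "\<dots> = act a (pl t g)" using a g by (simp add: act_pl act_t_eq)
    also have "\<dots> = act a (pl (neg g) t)" using g by (simp add: t_pl_Fix)
    also have "\<dots> = pl (neg g) (pl h t)" using a g by (simp add: act_pl act_t_eq)
    finally have "pl (pl h (neg g)) t = pl (pl (neg g) h) t" using g h by (simp add: pl_assoc)
    then show ?thesis using g h by simp
  qed
  from this[of "neg g" h] show "g \<in> Fix \<Longrightarrow> h \<in> Fix \<Longrightarrow> pl g h = pl h g" by simp
qed

lemma Fix_lcomm: "a \<in> Fix \<Longrightarrow> b \<in> Fix \<Longrightarrow> c \<in> A \<Longrightarrow> pl a (pl b c) = pl b (pl a c)"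
  by (simp add: pl_assoc[symmetric] Fix_comm)

lemma y0_y0: "pl y0 y0 = zero"
proof -
  have "pl t y0 = pl y0 t" unfolding y0_def by (simp add: pl_assoc)
  then have "pl (neg y0) t = pl y0 t" using t_pl_Fix[OF y0_Fix] by simp
  then have "neg y0 = y0" by simp
  then show ?thesis using pl_neg(1)[of y0] by simp
qed

lemma delta_ci: "a \<in> A \<Longrightarrow> b \<in> A \<Longrightarrow> delta (ci a b) = pl (delta a) (delta b)"
proof -
  assume a: "a \<in> A" and b: "b \<in> A"
  have "pl (delta (ci a b)) t = act (ci a b) t" using a b by (simp add: act_t_eq)
  also have "\<dots> = act a (act b t)" using a b by (simp add: act_ci)
  also have "\<dots> = pl (pl (delta b) (delta a)) t" using a b by (simp add: act_t_eq act_pl act_Fix pl_assoc)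
  finally have "delta (ci a b) = pl (delta b) (delta a)" using a b by simp
  then show ?thesis using a b Fix_comm by simp
qed

lemma ci_Fix: "f \<in> Fix \<Longrightarrow> g \<in> Fix \<Longrightarrow> ci f g = pl f g"
  by (simp add: ci_eq_pl_act act_Fix)

lemma delta_pl: "f \<in> Fix \<Longrightarrow> g \<in> Fix \<Longrightarrow> delta (pl f g) = pl (delta f) (delta g)"
  using delta_ci[of f g] ci_Fix by simp

lemma delta_zero: "delta zero = zero" unfolding delta_def by simp

lemma delta_neg: "f \<in> Fix \<Longrightarrow> delta (neg f) = neg (delta f)"
proof -
  assume f: "f \<in> Fix"
  have "pl (delta (neg f)) (delta f) = zero" using delta_pl[of "neg f" f] f delta_zero by simp
  then show ?thesis using add.inv_equality[of "delta (neg f)" "delta f"] f by simp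
qed

lemma delta_pl_t: "f \<in> Fix \<Longrightarrow> delta (pl f t) = pl z0 (neg (delta f))"
proof -
  assume f: "f \<in> Fix"
  have "ci t (neg f) = pl f t" using f by (simp add: ci_eq_pl_act act_Fix t_pl_Fix)
  then have "delta (pl f t) = delta (ci t (neg f))" by simp
  also have "\<dots> = pl z0 (neg (delta f))" using f by (simp add: delta_ci z0_def delta_neg)
  finally show ?thesis .
qed

lemma z0_Fix [simp]: "z0 \<in> Fix" unfolding z0_def by simp

lemma delta_delta: "f \<in> Fix \<Longrightarrow> delta (delta f) = neg (pl (delta f) (delta f))"
proof -
  assume f: "f \<in> Fix"
  have "ci f t = pl (pl f (delta f)) t" using f by (simp add: ci_eq_pl_act act_t_eq pl_assoc)
  then have "delta (ci f t) = pl z0 (neg (pl (delta f) (delta (delta f))))" using f by (simp add: delta_pl_t delta_pl)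
  moreover have "delta (ci f t) = pl (delta f) z0" using f by (simp add: delta_ci z0_def)
  ultimately have "pl z0 (delta f) = pl z0 (neg (pl (delta f) (delta (delta f))))" using f Fix_comm by simp
  then have "delta f = neg (pl (delta f) (delta (delta f)))" using f by simp
  then have "neg (delta f) = neg (neg (pl (delta f) (delta (delta f))))" by simp
  then have e: "neg (delta f) = pl (delta f) (delta (delta f))" using f by simp
  have "delta (delta f) = pl (neg (delta f)) (pl (delta f) (delta (delta f)))" using f by simp
  also have "\<dots> = pl (neg (delta f)) (neg (delta f))" using e by simp
  finally show ?thesis using f by (simp add: neg_pl)
qed

lemma delta_z0: "delta z0 = pl (delta y0) (neg (pl z0 z0))"
proof -
  have "ci t t = pl t (pl z0 t)" by (simp add: ci_eq_pl_act act_t_eq z0_def)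
  also have "\<dots> = pl (neg z0) y0" by (simp add: t_pl_Fix y0_def flip: pl_assoc)
  finally have ct: "ci t t = pl (neg z0) y0" .
  have "pl z0 z0 = delta (ci t t)" by (simp add: delta_ci z0_def)
  also have "\<dots> = pl (neg (delta z0)) (delta y0)" using ct by (simp add: delta_pl delta_neg)
  finally have e: "pl z0 z0 = pl (neg (delta z0)) (delta y0)" .
  have "delta y0 = pl (delta z0) (pl (neg (delta z0)) (delta y0))" by simp
  also have "\<dots> = pl (delta z0) (pl z0 z0)" using e by simp
  finally have "pl (delta y0) (neg (pl z0 z0)) = pl (pl (delta z0) (pl z0 z0)) (neg (pl z0 z0))" by simp
  also have "\<dots> = delta z0" by (simp add: pl_assoc)
  finally show ?thesis by simp
qed

definition F0 :: "'a monoid" where "F0 = (op_grp A pl)\<lparr>carrier := Fix\<rparr>"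

lemma F0_simps [simp]: "carrier F0 = Fix" "monoid.mult F0 = pl" "one F0 = zero"
  by (simp_all add: F0_def)

lemma F0_inv [simp]: "h \<in> Fix \<Longrightarrow> inv\<^bsub>F0\<^esub> h = neg h"
  unfolding F0_def using add.m_inv_consistent[OF Fix_subgroup] by simp

lemma F0_comm: "comm_group F0"
proof -
  have "group F0" unfolding F0_def by (rule add.subgroup_imp_group[OF Fix_subgroup])
  then show ?thesis by (rule group.group_comm_groupI) (simp add: Fix_comm)
qed

lemma card_Fix_gt_1: "card Fix > 1" using card_nonfixed card_nonfixed_gt_1 by simp

lemma delta_y0_z0: "pl (delta y0) (neg (delta z0)) = pl z0 z0"
proof -
  have "neg (delta z0) = pl (pl z0 z0) (neg (delta y0))" by (simp add: delta_z0 neg_pl)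
  then have "pl (delta y0) (neg (delta z0)) = pl (delta y0) (pl (neg (delta y0)) (pl z0 z0))" by (simp add: Fix_comm)
  then show ?thesis by simp
qed

lemma psi_F0_delta:
  assumes "f \<in> Fix"
  shows "psi_map F0 delta z0 f 0 1 = delta f"
    and "psi_map F0 delta z0 (pl (pl y0 (neg z0)) (neg f)) 1 1 = delta (pl f t)"
proof -
  show "psi_map F0 delta z0 f 0 1 = delta f" using assms by (simp add: psi_map_def)
  have "delta (pl (pl y0 (neg z0)) (neg f)) = pl (pl (delta y0) (neg (delta z0))) (neg (delta f))"
    using assms by (simp add: delta_pl delta_neg)
  also have "\<dots> = pl (pl z0 z0) (neg (delta f))" by (simp add: delta_y0_z0)
  finally have "psi_map F0 delta z0 (pl (pl y0 (neg z0)) (neg f)) 1 1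
      = pl (pl (pl z0 z0) (neg (delta f))) (neg z0)"
    using assms by (simp add: psi_map_def)
  also have "\<dots> = pl z0 (neg (delta f))"
    using assms by (simp add: pl_assoc Fix_comm Fix_lcomm)
  finally show "psi_map F0 delta z0 (pl (pl y0 (neg z0)) (neg f)) 1 1 = delta (pl f t)"
    using assms by (simp add: delta_pl_t)
qed

lemma psi_surj_F0: "(\<lambda>(f, k1, k2). psi_map F0 delta z0 f k1 k2) ` (carrier F0 \<times> Z2 \<times> Z2) = carrier F0"
proof (intro equalityI subsetI)
  fix h assume "h \<in> carrier F0"
  then obtain a where a: "a \<in> A" "h = delta a" using delta_surj by auto
  show "h \<in> (\<lambda>(f, k1, k2). psi_map F0 delta z0 f k1 k2) ` (carrier F0 \<times> Z2 \<times> Z2)"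
  using a(1) proof (cases rule: Fix_coset_cases)
    case fixed
    then show ?thesis
      using a psi_F0_delta(1)[of a] by (intro rev_image_eqI[of "(a, 0, 1)"]) (auto simp: Z2_def)
  next
    case (coset f)
    then show ?thesis
      using a psi_F0_delta(2)[of f]
      by (intro rev_image_eqI[of "(pl (pl y0 (neg z0)) (neg f), 1, 1)"]) (auto simp: Z2_def)
  qed
qed (auto simp: psi_map_def)

lemma admissible_F0: "admissible_params F0 y0 delta z0"
  unfolding admissible_params_def
proof (intro conjI)
  show "comm_group F0" by (rule F0_comm)
  show "finite (carrier F0)" using finite_Fix by simp
  show "carrier F0 \<noteq> {\<one>\<^bsub>F0\<^esub>}" using card_Fix_gt_1 by auto
  show "y0 \<in> carrier F0" by simp
  show "y0 \<otimes>\<^bsub>F0\<^esub> y0 = \<one>\<^bsub>F0\<^esub>" using y0_y0 by simp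
  show "delta \<in> hom F0 F0" by (rule homI) (simp_all add: delta_pl)
  show "z0 \<in> carrier F0" by simp
  show "delta z0 = delta y0 \<otimes>\<^bsub>F0\<^esub> inv\<^bsub>F0\<^esub> (z0 \<otimes>\<^bsub>F0\<^esub> z0)" by (simp add: delta_z0)
  show "\<forall>f\<in>carrier F0. delta (delta f) = inv\<^bsub>F0\<^esub> (delta f \<otimes>\<^bsub>F0\<^esub> delta f)" by (simp add: delta_delta)
  show "(\<lambda>(f, k1, k2). psi_map F0 delta z0 f k1 k2) ` (carrier F0 \<times> Z2 \<times> Z2) = carrier F0"
    by (rule psi_surj_F0)
qed

definition coord :: "'a \<Rightarrow> 'a \<times> nat" where "coord a = (if a \<in> Fix then (a, 0::nat) else (pl a (neg t), 1))"

lemma coord_Fix: "f \<in> Fix \<Longrightarrow> coord f = (f, 0)" by (simp add: coord_def)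
lemma coord_pl_t: "f \<in> Fix \<Longrightarrow> coord (pl f t) = (f, 1)"
  using pl_t_nonfixed[of f] by (simp add: coord_def pl_assoc)

lemma coord_bij: "bij_betw coord A (std_carrier F0)"
proof (rule bij_betw_byWitness[where f'="\<lambda>(f, k). if k = 0 then f else pl f t"])
  show "\<forall>a\<in>A. (\<lambda>(f, k). if k = 0 then f else pl f t) (coord a) = a"
    by (auto simp: coord_def pl_assoc)
  show "\<forall>p\<in>std_carrier F0. coord ((\<lambda>(f, k). if k = 0 then f else pl f t) p) = p"
    by (auto simp: std_carrier_def Z2_def coord_Fix coord_pl_t)
  show "coord ` A \<subseteq> std_carrier F0"
  proof
    fix p assume "p \<in> coord ` A"
    then obtain a where a: "a \<in> A" "p = coord a" by blast
    then show "p \<in> std_carrier F0"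
      by (cases rule: Fix_coset_cases) (auto simp: coord_Fix coord_pl_t Z2_def)
  qed
  show "(\<lambda>(f, k). if k = 0 then f else pl f t) ` std_carrier F0 \<subseteq> A"
    by (auto simp: std_carrier_def Z2_def)
qed

lemmas std_op_defs = std_add_def std_circ_def sgn_act_def kk_y_def psi_map_def

lemma coord_pl: "a \<in> A \<Longrightarrow> b \<in> A \<Longrightarrow> coord (pl a b) = std_add F0 y0 (coord a) (coord b)"
proof -
  assume a: "a \<in> A" and b: "b \<in> A"
  show ?thesis
  using a proof (cases rule: Fix_coset_cases)
    case fixed note a_fixed = fixed
    show ?thesis
    using b proof (cases rule: Fix_coset_cases)
      case fixed
      then show ?thesis using a_fixed fixed by (simp add: coord_Fix std_op_defs)
    next
      case (coset f2)
      have "pl a b = pl (pl a f2) t" using a_fixed coset by (simp add: pl_assoc)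
      then show ?thesis using a_fixed coset by (simp add: coord_Fix coord_pl_t std_op_defs)
    qed
  next
    case (coset f1)
    show ?thesis
    using b proof (cases rule: Fix_coset_cases)
      case fixed
      have "pl a b = pl (pl f1 (neg b)) t" using coset fixed by (simp add: pl_assoc t_pl_Fix)
      then show ?thesis using coset fixed by (simp add: coord_Fix coord_pl_t std_op_defs)
    next
      case coset2: (coset f2)
      have "pl a b = pl f1 (pl (pl t f2) t)" using coset coset2 by (simp add: pl_assoc)
      also have "\<dots> = pl (pl f1 (neg f2)) y0" using coset coset2 by (simp add: pl_assoc t_pl_Fix y0_def)
      finally show ?thesis using coset coset2 by (simp add: coord_Fix coord_pl_t std_op_defs)
    qed
  qed
qed

lemma coord_ci: "a \<in> A \<Longrightarrow> b \<in> A \<Longrightarrow> coord (ci a b) = std_circ F0 y0 (psi_map F0 delta z0) (coord a) (coord b)"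
proof -
  assume a: "a \<in> A" and b: "b \<in> A"
  show ?thesis
  using a proof (cases rule: Fix_coset_cases)
    case fixed note a_fixed = fixed
    show ?thesis
    using b proof (cases rule: Fix_coset_cases)
      case fixed
      then show ?thesis using a_fixed fixed by (simp add: ci_Fix coord_Fix std_op_defs)
    next
      case (coset f2)
      have "ci a b = pl (pl (pl a f2) (delta a)) t" using a_fixed coset
        by (simp add: ci_eq_pl_act act_pl act_Fix act_t_eq pl_assoc Fix_lcomm)
      then show ?thesis using a_fixed coset by (simp add: coord_Fix coord_pl_t std_op_defs)
    qed
  next
    case (coset f1)
    show ?thesis
    using b proof (cases rule: Fix_coset_cases)
      case fixed
      have "ci a b = pl (pl f1 (neg b)) t" using coset fixed by (simp add: ci_eq_pl_act act_Fix pl_assoc t_pl_Fix)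
      then show ?thesis using coset fixed by (simp add: coord_Fix coord_pl_t std_op_defs)
    next
      case coset2: (coset f2)
      define x where "x = pl f2 (pl z0 (neg (delta f1)))"
      have xH: "x \<in> Fix" unfolding x_def using coset2 coset by simp
      have "ci a b = pl a (pl f2 (pl (delta a) t))" using coset coset2 by (simp add: ci_eq_pl_act act_pl act_Fix act_t_eq)
      also have "\<dots> = pl f1 (pl t (pl x t))" using coset coset2 by (simp add: delta_pl_t x_def pl_assoc)
      also have "\<dots> = pl f1 (pl (pl t x) t)" using coset xH by (simp add: pl_assoc)
      also have "\<dots> = pl f1 (pl (pl (neg x) t) t)" using xH by (simp add: t_pl_Fix)
      also have "\<dots> = pl (pl f1 (neg x)) y0" using coset xH by (simp add: pl_assoc y0_def)
      also have "\<dots> = pl (pl (pl f1 (neg f2)) (pl (delta f1) (neg z0))) y0"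
        using coset coset2 by (simp add: x_def neg_pl pl_assoc Fix_comm Fix_lcomm)
      finally have "coord (ci a b) = (pl (pl (pl f1 (neg f2)) (pl (delta f1) (neg z0))) y0, 0)"
        using coset coset2 by (simp add: coord_Fix)
      then show ?thesis
        using coset coset2 by (simp add: coord_pl_t std_op_defs)
    qed
  qed
qed

lemma brace_iso_coord:
  "brace_iso A pl ci (std_carrier F0) (std_add F0 y0) (std_circ F0 y0 (psi_map F0 delta z0)) coord"
  using coord_bij coord_pl coord_ci by (simp add: brace_iso_def)

lemma std_model_on_nat:
  obtains F :: "nat monoid" and y phi z h where "admissible_params F y phi z"
    and "brace_iso A pl ci (std_carrier F) (std_add F y) (std_circ F y (psi_map F phi z)) h"
proof -
  interpret F0: std_model F0 y0 delta z0 by (rule std_model.intro[OF admissible_F0])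
  obtain F :: "nat monoid" and g where F: "group F" and g: "g \<in> iso F0 F"
    using F0.iso_copy_on_nat F0.admissible by (auto simp: admissible_params_def)
  show ?thesis
    using that F0.admissible_params_iso[OF F g]
      brace_iso_trans[OF brace_iso_coord F0.brace_iso_std_model[OF F g]] by blast
qed

end

theorem mainTheorem16:
  fixes A :: "'a set" and pl ci :: "'a \<Rightarrow> 'a \<Rightarrow> 'a"
  assumes "skew_brace A pl ci" and "finite A"
  shows "(card (Lambda_vertices A pl ci) = 1 \<longrightarrow>
            (\<exists>(F :: nat monoid) y phi z h. admissible_params F y phi z \<and>
               brace_iso A pl ci (std_carrier F) (std_add F y)
                 (std_circ F y (psi_map F phi z)) h))
       \<and> (\<forall>(F :: 'b monoid) y phi z h. admissible_params F y phi z \<and>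
               brace_iso A pl ci (std_carrier F) (std_add F y)
                 (std_circ F y (psi_map F phi z)) h
            \<longrightarrow> card (Lambda_vertices A pl ci) = 1)"
proof (intro conjI impI allI)
  assume "card (Lambda_vertices A pl ci) = 1"
  then interpret one_vertex_brace A pl ci
    using assms by (simp add: one_vertex_brace_def one_vertex_brace_axioms_def brace_def)
  show "\<exists>(F :: nat monoid) y phi z h. admissible_params F y phi z \<and>
      brace_iso A pl ci (std_carrier F) (std_add F y) (std_circ F y (psi_map F phi z)) h"
    by (rule std_model_on_nat) blast
next
  fix F :: "'b monoid" and y phi z h
  assume "admissible_params F y phi z \<and>
    brace_iso A pl ci (std_carrier F) (std_add F y) (std_circ F y (psi_map F phi z)) h"
  then show "card (Lambda_vertices A pl ci) = 1"
    by (elim conjE) (rule card_Lambda_vertices_std_model[OF assms(1)])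
qed

end
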